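(* Let $\boldsymbol\gamma\in(0,\infty)^B$ and parameters $0<\alpha<\beta$, $\kappa>0$, $a\in\mathbb R$ with $\kappa\log_2\alpha+a=\log_2(1+\alpha)$ and $\kappa(1+\alpha)\le\alpha$; define $I^{\rm ref}(\rho)=\log_2(1+\rho)$ for $0\le\rho\le\alpha$, $\kappa\log_2\rho+a$ for $\alpha<\rho\le\beta$, and $\kappa\log_2\beta+a$ for $\rho>\beta$. Let $0<R<\kappa\log_2\beta+a$. The problem \[ \text{minimize }\frac1B\sum_{b=1}^B\wp_b\quad\text{subject to}\quad\frac1B\sum_{b=1}^BI^{\rm ref}(\wp_b\gamma_b)\ge R,\ \wp_b\ge0, \] is solved by \[ \wp_b=\begin{cases}\beta/\gamma_b,&\eta\ge\frac{\beta}{\kappa\gamma_b},\\ \kappa\eta,&\frac{\alpha}{\kappa\gamma_b}<\eta<\frac{\beta}{\kappa\gamma_b},\\ \alpha/\gamma_b,&\frac{\alpha+1}{\gamma_b}\le\eta\le\frac{\alpha}{\kappa\gamma_b},\\ \eta-1/\gamma_b,&\frac1{\gamma_b}\le\eta<\frac{\alpha+1}{\gamma_b},\\ 0,&\text{otherwise},\end{cases} \] where $\eta$ is chosen such that $\sum_{b=1}^BI^{\rm ref}(\wp_b\gamma_b)=BR$.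
   Context: $I^{\rm ref}$ is a piecewise approximation (refined truncated water-filling) of a discrete-input mutual information curve; the condition $\kappa(1+\alpha)\le\alpha$ ensures that its slope does not increase at $\rho=\alpha$. *)

theory Defs
  imports Complex_Main
begin

definition Iref :: "real \<Rightarrow> real \<Rightarrow> real \<Rightarrow> real \<Rightarrow> real \<Rightarrow> real" where
  "Iref \<alpha> \<beta> \<kappa> a \<rho> =
     (if \<rho> \<le> \<alpha> then log 2 (1 + \<rho>)
      else if \<rho> \<le> \<beta> then \<kappa> * log 2 \<rho> + a
      else \<kappa> * log 2 \<beta> + a)"

definition wp :: "real \<Rightarrow> real \<Rightarrow> real \<Rightarrow> real \<Rightarrow> real \<Rightarrow> real" where
  "wp \<alpha> \<beta> \<kappa> g \<eta> =
     (if \<eta> \<ge> \<beta> / (\<kappa> * g) then \<beta> / g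
      else if \<alpha> / (\<kappa> * g) < \<eta> \<and> \<eta> < \<beta> / (\<kappa> * g) then \<kappa> * \<eta>
      else if (\<alpha> + 1) / g \<le> \<eta> \<and> \<eta> \<le> \<alpha> / (\<kappa> * g) then \<alpha> / g
      else if 1 / g \<le> \<eta> \<and> \<eta> < (\<alpha> + 1) / g then \<eta> - 1 / g
      else 0)"

definition feasible :: "nat \<Rightarrow> (nat \<Rightarrow> real) \<Rightarrow> real \<Rightarrow> real \<Rightarrow> real \<Rightarrow> real \<Rightarrow> real \<Rightarrow> (nat \<Rightarrow> real) \<Rightarrow> bool" where
  "feasible B \<gamma> \<alpha> \<beta> \<kappa> a R p \<longleftrightarrow>
     (\<forall>b<B. p b \<ge> 0) \<and> (1 / real B) * (\<Sum>b<B. Iref \<alpha> \<beta> \<kappa> a (p b * \<gamma> b)) \<ge> R"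

end

theory Submission
  imports Defs
begin

text \<open>
  Measure rates in nats, r(\<sigma>) = ln 2 \<cdot> Iref(\<sigma>).  Under the hypotheses, r is
  concave on [0,\<infinity>), and we make this concrete through supergradients: s is a supergradient
  of r at \<rho> if r(\<sigma>) \<le> r(\<rho>) + s(\<sigma> - \<rho>) for all \<sigma> \<ge> 0.  From the tangent lines of ln
  we obtain the supergradients 1/(1+\<rho>) on [0,\<alpha>], \<kappa>/\<rho> on [\<alpha>,\<beta>] and 0 at \<beta>; since
  supergradients at a point form an interval, the slope 1/u is a supergradient at the
  received SNR opt_snr u = wp \<cdot> g chosen by the allocation for water level \<eta> = u/g.
  This says that wp minimises the per-block Lagrangian p - \<eta> r(p g), and summing over
  the blocks shows that wp needs no more power than any feasible allocation.  Finally
  the achieved sum rate is a continuous function of \<eta> (via a min/max closed form)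
  ranging from 0 to B times the saturation rate, so a suitable \<eta> exists by the IVT.
\<close>

lemma ln_tangent:
  fixes x y :: real
  assumes "0 < x" "0 < y"
  shows "ln x \<le> ln y + (1 / y) * (x - y)"
proof -
  have "ln (x / y) \<le> x / y - 1" using ln_le_minus_one[of "x / y"] assms by simp
  moreover have "ln (x / y) = ln x - ln y" using assms by (simp add: ln_div)
  moreover have "x / y - 1 = (1 / y) * (x - y)" using assms by (simp add: field_simps)
  ultimately show ?thesis by simp
qed

text \<open>The received SNR wp \<cdot> g selected by the allocation depends only on u = \<eta> g.\<close>
definition opt_snr :: "real \<Rightarrow> real \<Rightarrow> real \<Rightarrow> real \<Rightarrow> real" where
  "opt_snr \<alpha> \<beta> \<kappa> u =
     (if \<beta> \<le> \<kappa> * u then \<beta> else if \<alpha> < \<kappa> * u then \<kappa> * u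
      else if \<alpha> + 1 \<le> u then \<alpha> else if 1 \<le> u then u - 1 else 0)"

lemma wp_times_gain:
  assumes "0 < \<kappa>" "0 < g"
  shows "wp \<alpha> \<beta> \<kappa> g \<eta> * g = opt_snr \<alpha> \<beta> \<kappa> (\<eta> * g)"
  using assms by (simp add: wp_def opt_snr_def field_simps)

locale refined_iref =
  fixes \<alpha> \<beta> \<kappa> a :: real
  assumes alpha_pos: "0 < \<alpha>" and alpha_less_beta: "\<alpha> < \<beta>" and kappa_pos: "0 < \<kappa>"
    and continuity: "\<kappa> * log 2 \<alpha> + a = log 2 (1 + \<alpha>)"
    and slope_drop: "\<kappa> * (1 + \<alpha>) \<le> \<alpha>"
begin

definition rate :: "real \<Rightarrow> real" where
  "rate \<sigma> = ln 2 * Iref \<alpha> \<beta> \<kappa> a \<sigma>"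

definition supgrad :: "real \<Rightarrow> real \<Rightarrow> bool" where
  "supgrad \<rho> s \<longleftrightarrow> (\<forall>\<sigma>\<ge>0. rate \<sigma> \<le> rate \<rho> + s * (\<sigma> - \<rho>))"

text \<open>The three pieces of the rate; the continuity hypothesis glues the first two at \<alpha>.\<close>
lemma continuity_ln: "\<kappa> * ln \<alpha> + a * ln 2 = ln (1 + \<alpha>)"
proof -
  have "ln 2 * (\<kappa> * log 2 \<alpha> + a) = ln 2 * log 2 (1 + \<alpha>)" using continuity by simp
  hence "(\<kappa> * ln \<alpha> + a * ln 2) * ln 2 = ln (1 + \<alpha>) * ln 2"
    using alpha_pos by (simp add: log_def field_simps)
  thus ?thesis by simp
qed

lemma rate_low: "\<sigma> \<le> \<alpha> \<Longrightarrow> rate \<sigma> = ln (1 + \<sigma>)"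
  by (simp add: rate_def Iref_def log_def)

lemma rate_mid: "\<alpha> \<le> \<sigma> \<Longrightarrow> \<sigma> \<le> \<beta> \<Longrightarrow> rate \<sigma> = \<kappa> * ln \<sigma> + a * ln 2"
  using continuity_ln by (cases "\<sigma> = \<alpha>") (auto simp: rate_def Iref_def log_def field_simps)

lemma rate_high: "\<beta> \<le> \<sigma> \<Longrightarrow> rate \<sigma> = rate \<beta>"
  using alpha_less_beta by (cases "\<sigma> = \<beta>") (auto simp: rate_def Iref_def)

text \<open>The hypothesis \<kappa>(1+\<alpha>) \<le> \<alpha>: the slope of r does not increase at \<alpha>.\<close>
lemma slopes_at_alpha: "\<kappa> / \<alpha> \<le> 1 / (1 + \<alpha>)"
  using slope_drop alpha_pos by (simp add: field_simps)

lemma kappa_ln_tangent: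
  "0 < x \<Longrightarrow> 0 < y \<Longrightarrow> \<kappa> * ln x \<le> \<kappa> * ln y + (\<kappa> / y) * (x - y)"
  using mult_left_mono[OF ln_tangent[of x y] less_imp_le[OF kappa_pos]]
  by (simp add: algebra_simps)

lemma supgrad_between:
  assumes "supgrad \<rho> s1" "supgrad \<rho> s2" "s1 \<le> s" "s \<le> s2"
  shows "supgrad \<rho> s"
  unfolding supgrad_def
proof (intro allI impI)
  fix \<sigma> :: real assume "0 \<le> \<sigma>"
  show "rate \<sigma> \<le> rate \<rho> + s * (\<sigma> - \<rho>)"
  proof (cases "\<rho> \<le> \<sigma>")
    case True
    have "s1 * (\<sigma> - \<rho>) \<le> s * (\<sigma> - \<rho>)" using True assms(3) by (intro mult_right_mono) auto
    thus ?thesis using assms(1) \<open>0 \<le> \<sigma>\<close> unfolding supgrad_def by force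
  next
    case False
    have "s2 * (\<sigma> - \<rho>) \<le> s * (\<sigma> - \<rho>)" using False assms(4) by (intro mult_right_mono_neg) auto
    thus ?thesis using assms(2) \<open>0 \<le> \<sigma>\<close> unfolding supgrad_def by force
  qed
qed

lemma supgrad_zero_mono:
  assumes "supgrad 0 s1" "s1 \<le> s"
  shows "supgrad 0 s"
  unfolding supgrad_def
proof (intro allI impI)
  fix \<sigma> :: real assume "0 \<le> \<sigma>"
  hence "s1 * \<sigma> \<le> s * \<sigma>" using assms(2) by (intro mult_right_mono)
  thus "rate \<sigma> \<le> rate 0 + s * (\<sigma> - 0)" using assms(1) \<open>0 \<le> \<sigma>\<close> unfolding supgrad_def by force
qed

lemma supgrad_mid:
  assumes "\<alpha> \<le> \<rho>" "\<rho> \<le> \<beta>"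
  shows "supgrad \<rho> (\<kappa> / \<rho>)"
  unfolding supgrad_def
proof (intro allI impI)
  fix \<sigma> :: real assume "0 \<le> \<sigma>"
  have \<rho>_pos: "0 < \<rho>" using assms alpha_pos by simp
  have on_piece: "rate \<tau> \<le> rate \<rho> + (\<kappa> / \<rho>) * (\<tau> - \<rho>)" if "\<alpha> \<le> \<tau>" "\<tau> \<le> \<beta>" for \<tau>
    using rate_mid[OF that] rate_mid[OF assms] kappa_ln_tangent[of \<tau> \<rho>] that \<rho>_pos alpha_pos
    by simp
  consider "\<sigma> < \<alpha>" | "\<alpha> \<le> \<sigma>" "\<sigma> \<le> \<beta>" | "\<beta> < \<sigma>" by linarith
  thus "rate \<sigma> \<le> rate \<rho> + (\<kappa> / \<rho>) * (\<sigma> - \<rho>)"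
  proof cases
    case 1
    have "rate \<sigma> \<le> ln (1 + \<alpha>) + (1 / (1 + \<alpha>)) * (\<sigma> - \<alpha>)"
      using rate_low[of \<sigma>] ln_tangent[of "1 + \<sigma>" "1 + \<alpha>"] 1 \<open>0 \<le> \<sigma>\<close> alpha_pos by simp
    also have "\<dots> \<le> ln (1 + \<alpha>) + (\<kappa> / \<alpha>) * (\<sigma> - \<alpha>)"
      using 1 slopes_at_alpha by (intro add_left_mono mult_right_mono_neg) auto
    also have "\<dots> \<le> ln (1 + \<alpha>) + (\<kappa> / \<rho>) * (\<sigma> - \<alpha>)"
    proof -
      have "\<kappa> / \<rho> \<le> \<kappa> / \<alpha>"
        using assms alpha_pos kappa_pos by (intro divide_left_mono) auto
      thus ?thesis using 1 by (intro add_left_mono mult_right_mono_neg) auto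
    qed
    also have "\<dots> = rate \<alpha> + (\<kappa> / \<rho>) * (\<sigma> - \<alpha>)" using rate_low[of \<alpha>] by simp
    also have "\<dots> \<le> rate \<rho> + (\<kappa> / \<rho>) * (\<alpha> - \<rho>) + (\<kappa> / \<rho>) * (\<sigma> - \<alpha>)"
      using on_piece[of \<alpha>] assms alpha_less_beta by simp
    also have "\<dots> = rate \<rho> + (\<kappa> / \<rho>) * (\<sigma> - \<rho>)" by (simp add: right_diff_distrib)
    finally show ?thesis .
  next
    case 2 thus ?thesis by (rule on_piece)
  next
    case 3
    have "(\<kappa> / \<rho>) * (\<beta> - \<rho>) \<le> (\<kappa> / \<rho>) * (\<sigma> - \<rho>)"
      using 3 \<rho>_pos kappa_pos by (intro mult_left_mono) auto
    thus ?thesis using on_piece[of \<beta>] rate_high[of \<sigma>] 3 assms by simp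
  qed
qed

lemma supgrad_low:
  assumes "0 \<le> \<rho>" "\<rho> \<le> \<alpha>"
  shows "supgrad \<rho> (1 / (1 + \<rho>))"
  unfolding supgrad_def
proof (intro allI impI)
  fix \<sigma> :: real assume "0 \<le> \<sigma>"
  have on_piece: "rate \<tau> \<le> rate \<rho> + (1 / (1 + \<rho>)) * (\<tau> - \<rho>)" if "0 \<le> \<tau>" "\<tau> \<le> \<alpha>" for \<tau>
    using rate_low[of \<tau>] rate_low[of \<rho>] ln_tangent[of "1 + \<tau>" "1 + \<rho>"] that assms by simp
  show "rate \<sigma> \<le> rate \<rho> + (1 / (1 + \<rho>)) * (\<sigma> - \<rho>)"
  proof (cases "\<sigma> \<le> \<alpha>")
    case True thus ?thesis using on_piece \<open>0 \<le> \<sigma>\<close> by simp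
  next
    case False
    have "rate \<sigma> \<le> rate \<alpha> + (\<kappa> / \<alpha>) * (\<sigma> - \<alpha>)"
      using supgrad_mid[of \<alpha>] alpha_less_beta \<open>0 \<le> \<sigma>\<close> unfolding supgrad_def by simp
    also have "\<dots> \<le> rate \<alpha> + (1 / (1 + \<alpha>)) * (\<sigma> - \<alpha>)"
      using False slopes_at_alpha by (intro add_left_mono mult_right_mono) auto
    also have "\<dots> \<le> rate \<alpha> + (1 / (1 + \<rho>)) * (\<sigma> - \<alpha>)"
    proof -
      have "1 / (1 + \<alpha>) \<le> 1 / (1 + \<rho>)" using assms by (simp add: field_simps)
      thus ?thesis using False by (intro add_left_mono mult_right_mono) auto
    qed
    also have "\<dots> \<le> rate \<rho> + (1 / (1 + \<rho>)) * (\<alpha> - \<rho>) + (1 / (1 + \<rho>)) * (\<sigma> - \<alpha>)"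
      using on_piece[of \<alpha>] assms alpha_pos by simp
    also have "\<dots> = rate \<rho> + (1 / (1 + \<rho>)) * (\<sigma> - \<rho>)" by (simp add: right_diff_distrib)
    finally show ?thesis .
  qed
qed

lemma supgrad_saturation: "supgrad \<beta> 0"
  unfolding supgrad_def
proof (intro allI impI)
  fix \<sigma> :: real assume "0 \<le> \<sigma>"
  show "rate \<sigma> \<le> rate \<beta> + 0 * (\<sigma> - \<beta>)"
  proof (cases "\<sigma> \<le> \<beta>")
    case True
    have "rate \<sigma> \<le> rate \<beta> + (\<kappa> / \<beta>) * (\<sigma> - \<beta>)"
      using supgrad_mid[of \<beta>] alpha_less_beta \<open>0 \<le> \<sigma>\<close> unfolding supgrad_def by simp
    moreover have "(\<kappa> / \<beta>) * (\<sigma> - \<beta>) \<le> 0"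
    proof (rule mult_nonneg_nonpos)
      show "0 \<le> \<kappa> / \<beta>" using alpha_pos alpha_less_beta kappa_pos by simp
      show "\<sigma> - \<beta> \<le> 0" using True by simp
    qed
    ultimately show ?thesis by simp
  next
    case False
    thus ?thesis using rate_high[of \<sigma>] by simp
  qed
qed

lemma supgrad_opt_snr:
  assumes u: "0 < u"
  shows "supgrad (opt_snr \<alpha> \<beta> \<kappa> u) (1 / u)"
proof -
  have "supgrad 0 (1 / (1 + 0))" using alpha_pos by (intro supgrad_low) auto
  hence low_zero: "supgrad 0 1" by simp
  consider "\<beta> \<le> \<kappa> * u" | "\<alpha> < \<kappa> * u" "\<kappa> * u < \<beta>" | "\<kappa> * u \<le> \<alpha>" "\<alpha> + 1 \<le> u"
    | "\<kappa> * u \<le> \<alpha>" "1 \<le> u" "u < \<alpha> + 1" | "\<kappa> * u \<le> \<alpha>" "u < 1" by linarith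
  thus ?thesis
  proof cases
    case 1
    have "opt_snr \<alpha> \<beta> \<kappa> u = \<beta>" using 1 by (simp add: opt_snr_def)
    moreover have "1 / u \<le> \<kappa> / \<beta>" using 1 u alpha_pos alpha_less_beta by (simp add: field_simps)
    ultimately show ?thesis
      using supgrad_between[OF supgrad_saturation supgrad_mid[of \<beta>]] u alpha_less_beta by simp
  next
    case 2
    have "opt_snr \<alpha> \<beta> \<kappa> u = \<kappa> * u" using 2 by (simp add: opt_snr_def)
    moreover have "\<kappa> / (\<kappa> * u) = 1 / u" using kappa_pos by simp
    ultimately show ?thesis using supgrad_mid[of "\<kappa> * u"] 2 by simp
  next
    case 3
    have "opt_snr \<alpha> \<beta> \<kappa> u = \<alpha>" using 3 alpha_less_beta by (simp add: opt_snr_def)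
    moreover have "\<kappa> / \<alpha> \<le> 1 / u" "1 / u \<le> 1 / (1 + \<alpha>)"
      using 3 u alpha_pos by (simp_all add: field_simps)
    ultimately show ?thesis
      using supgrad_between[OF supgrad_mid[of \<alpha>] supgrad_low[of \<alpha>]] alpha_pos alpha_less_beta
      by simp
  next
    case 4
    have "opt_snr \<alpha> \<beta> \<kappa> u = u - 1" using 4 alpha_pos alpha_less_beta by (simp add: opt_snr_def)
    thus ?thesis using supgrad_low[of "u - 1"] 4 by simp
  next
    case 5
    have "opt_snr \<alpha> \<beta> \<kappa> u = 0" using 5 alpha_pos alpha_less_beta by (simp add: opt_snr_def)
    moreover have "1 \<le> 1 / u" using 5 u by simp
    ultimately show ?thesis using supgrad_zero_mono[OF low_zero] by simp
  qed
qed

lemma wp_minimises_lagrangian: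
  assumes "0 < \<eta>" "0 < g" "0 \<le> p"
  shows "wp \<alpha> \<beta> \<kappa> g \<eta> - \<eta> * rate (wp \<alpha> \<beta> \<kappa> g \<eta> * g) \<le> p - \<eta> * rate (p * g)"
proof -
  let ?w = "wp \<alpha> \<beta> \<kappa> g \<eta>"
  have "rate (p * g) \<le> rate (?w * g) + (1 / (\<eta> * g)) * (p * g - ?w * g)"
    using supgrad_opt_snr[of "\<eta> * g"] assms wp_times_gain[OF kappa_pos \<open>0 < g\<close>]
    unfolding supgrad_def by simp
  hence "\<eta> * rate (p * g) \<le> \<eta> * (rate (?w * g) + (1 / (\<eta> * g)) * (p * g - ?w * g))"
    using assms(1) by (intro mult_left_mono) auto
  also have "\<dots> = \<eta> * rate (?w * g) + (p - ?w)"
    using assms by (simp add: field_simps)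
  finally show ?thesis by simp
qed

lemma opt_snr_nonneg: "0 \<le> opt_snr \<alpha> \<beta> \<kappa> u"
  using alpha_pos alpha_less_beta by (simp add: opt_snr_def)

lemma wp_nonneg:
  assumes "0 < g"
  shows "0 \<le> wp \<alpha> \<beta> \<kappa> g \<eta>"
proof -
  have "0 \<le> wp \<alpha> \<beta> \<kappa> g \<eta> * g"
    using opt_snr_nonneg wp_times_gain[OF kappa_pos assms] by simp
  thus ?thesis using assms by (simp add: zero_le_mult_iff)
qed

lemma saturated_first_piece: "\<alpha> < \<kappa> * u \<Longrightarrow> 1 + \<alpha> < u"
  using slope_drop kappa_pos by (smt (verit) mult_less_cancel_left_pos)

text \<open>A closed form of the achieved rate from which continuity in u is evident.\<close>
lemma Iref_opt_snr_closed_form: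
  "Iref \<alpha> \<beta> \<kappa> a (opt_snr \<alpha> \<beta> \<kappa> u) =
     log 2 (max 1 (min u (1 + \<alpha>))) + \<kappa> * log 2 (min \<beta> (max \<alpha> (\<kappa> * u))) + a - log 2 (1 + \<alpha>)"
proof (cases "\<alpha> < \<kappa> * u")
  case True
  thus ?thesis using saturated_first_piece[OF True] alpha_pos alpha_less_beta
    by (simp add: opt_snr_def Iref_def)
next
  case False
  thus ?thesis using alpha_pos alpha_less_beta continuity by (simp add: opt_snr_def Iref_def)
qed

lemma continuous_sum_rate:
  "continuous_on UNIV (\<lambda>\<eta>. \<Sum>b<B. Iref \<alpha> \<beta> \<kappa> a (opt_snr \<alpha> \<beta> \<kappa> (\<eta> * \<gamma> b)))"
  unfolding Iref_opt_snr_closed_form using alpha_pos alpha_less_beta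
  by (intro continuous_intros) (auto simp: min_def max_def)

lemma water_level_exists:
  assumes gains: "\<forall>b<B. 0 < \<gamma> b" and "0 \<le> R" "R \<le> \<kappa> * log 2 \<beta> + a"
  shows "\<exists>\<eta>. (\<Sum>b<B. Iref \<alpha> \<beta> \<kappa> a (wp \<alpha> \<beta> \<kappa> (\<gamma> b) \<eta> * \<gamma> b)) = real B * R"
proof -
  define F where "F \<eta> = (\<Sum>b<B. Iref \<alpha> \<beta> \<kappa> a (opt_snr \<alpha> \<beta> \<kappa> (\<eta> * \<gamma> b)))" for \<eta>
  define M where "M = (\<beta> / \<kappa>) * (\<Sum>b<B. 1 / \<gamma> b)"
  have M_nonneg: "0 \<le> M"
    unfolding M_def using alpha_pos alpha_less_beta kappa_pos gains
    by (intro mult_nonneg_nonneg sum_nonneg) (auto intro: less_imp_le)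
  have saturated: "\<beta> \<le> \<kappa> * (M * \<gamma> b)" if b: "b < B" for b
  proof -
    have "1 / \<gamma> b \<le> (\<Sum>c<B. 1 / \<gamma> c)"
      using b gains by (intro member_le_sum) (auto intro: less_imp_le)
    hence "(\<beta> / \<kappa>) * (1 / \<gamma> b) \<le> M"
      unfolding M_def using alpha_pos alpha_less_beta kappa_pos by (intro mult_left_mono) auto
    thus ?thesis using gains b kappa_pos by (simp add: field_simps)
  qed
  have "F 0 = 0" unfolding F_def using alpha_pos alpha_less_beta by (simp add: opt_snr_def Iref_def)
  moreover have "F M = real B * (\<kappa> * log 2 \<beta> + a)"
    unfolding F_def using saturated alpha_less_beta by (simp add: opt_snr_def Iref_def)
  ultimately have "F 0 \<le> real B * R" "real B * R \<le> F M"
    using assms by (simp_all add: mult_left_mono)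
  then obtain \<eta> where "F \<eta> = real B * R"
    using IVT'[of F 0 "real B * R" M] M_nonneg
      continuous_on_subset[OF continuous_sum_rate[where B = B and \<gamma> = \<gamma>, folded F_def]] by auto
  moreover have "F \<eta> = (\<Sum>b<B. Iref \<alpha> \<beta> \<kappa> a (wp \<alpha> \<beta> \<kappa> (\<gamma> b) \<eta> * \<gamma> b))"
    unfolding F_def using wp_times_gain[OF kappa_pos] gains by (intro sum.cong) auto
  ultimately show ?thesis by auto
qed

text \<open>A water level meeting a positive target rate is positive: at \<eta> \<le> 0 no power is spent.\<close>
lemma water_level_pos:
  assumes gains: "\<forall>b<B. 0 < \<gamma> b" and "0 < B" "0 < R"
    and level: "(\<Sum>b<B. Iref \<alpha> \<beta> \<kappa> a (wp \<alpha> \<beta> \<kappa> (\<gamma> b) \<eta> * \<gamma> b)) = real B * R"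
  shows "0 < \<eta>"
proof (rule ccontr)
  assume "\<not> 0 < \<eta>"
  have no_snr: "wp \<alpha> \<beta> \<kappa> (\<gamma> b) \<eta> * \<gamma> b = 0" if "b < B" for b
  proof -
    have "\<eta> * \<gamma> b \<le> 0"
      using mult_nonpos_nonneg[of \<eta> "\<gamma> b"] \<open>\<not> 0 < \<eta>\<close> gains that by force
    moreover from this have "\<kappa> * (\<eta> * \<gamma> b) \<le> 0" using kappa_pos by (simp add: mult_nonneg_nonpos)
    ultimately have "opt_snr \<alpha> \<beta> \<kappa> (\<eta> * \<gamma> b) = 0"
      using alpha_pos alpha_less_beta by (simp add: opt_snr_def)
    thus ?thesis using wp_times_gain[OF kappa_pos] gains that by simp
  qed
  have "(\<Sum>b<B. Iref \<alpha> \<beta> \<kappa> a (wp \<alpha> \<beta> \<kappa> (\<gamma> b) \<eta> * \<gamma> b)) = 0"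
  proof (rule sum.neutral, intro ballI)
    fix b assume "b \<in> {..<B}"
    hence "wp \<alpha> \<beta> \<kappa> (\<gamma> b) \<eta> * \<gamma> b = 0" using no_snr by simp
    thus "Iref \<alpha> \<beta> \<kappa> a (wp \<alpha> \<beta> \<kappa> (\<gamma> b) \<eta> * \<gamma> b) = 0"
      using alpha_pos by (simp only:) (simp add: Iref_def)
  qed
  thus False using level assms by simp
qed

text \<open>Summing the blockwise Lagrangian bound: at a positive water level meeting the rate
  target, wp uses no more total power than any allocation achieving at least that rate.\<close>
lemma wp_minimal_power:
  assumes gains: "\<forall>b<B. 0 < \<gamma> b" and "0 < \<eta>" and p_nonneg: "\<forall>b<B. 0 \<le> p b"
    and level: "(\<Sum>b<B. Iref \<alpha> \<beta> \<kappa> a (wp \<alpha> \<beta> \<kappa> (\<gamma> b) \<eta> * \<gamma> b)) = real B * R"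
    and target: "real B * R \<le> (\<Sum>b<B. Iref \<alpha> \<beta> \<kappa> a (p b * \<gamma> b))"
  shows "(\<Sum>b<B. wp \<alpha> \<beta> \<kappa> (\<gamma> b) \<eta>) \<le> (\<Sum>b<B. p b)"
proof -
  let ?w = "\<lambda>b. wp \<alpha> \<beta> \<kappa> (\<gamma> b) \<eta>"
  have "(\<Sum>b<B. ?w b - \<eta> * rate (?w b * \<gamma> b)) \<le> (\<Sum>b<B. p b - \<eta> * rate (p b * \<gamma> b))"
    using wp_minimises_lagrangian assms by (intro sum_mono) auto
  hence "(\<Sum>b<B. ?w b) - \<eta> * ln 2 * (\<Sum>b<B. Iref \<alpha> \<beta> \<kappa> a (?w b * \<gamma> b))
      \<le> (\<Sum>b<B. p b) - \<eta> * ln 2 * (\<Sum>b<B. Iref \<alpha> \<beta> \<kappa> a (p b * \<gamma> b))"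
    by (simp add: rate_def sum_subtractf sum_distrib_left mult.assoc)
  moreover have "\<eta> * ln 2 * (real B * R) \<le> \<eta> * ln 2 * (\<Sum>b<B. Iref \<alpha> \<beta> \<kappa> a (p b * \<gamma> b))"
    using target \<open>0 < \<eta>\<close> by (intro mult_left_mono) auto
  ultimately show ?thesis using level by simp
qed

end

theorem theorem8:
  fixes B :: nat and \<gamma> :: "nat \<Rightarrow> real" and \<alpha> \<beta> \<kappa> a R :: real
  assumes "B > 0"
    and "\<forall>b<B. \<gamma> b > 0"
    and "0 < \<alpha>" and "\<alpha> < \<beta>" and "\<kappa> > 0"
    and "\<kappa> * log 2 \<alpha> + a = log 2 (1 + \<alpha>)"
    and "\<kappa> * (1 + \<alpha>) \<le> \<alpha>"
    and "0 < R" and "R < \<kappa> * log 2 \<beta> + a"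
  shows "(\<exists>\<eta>. (\<Sum>b<B. Iref \<alpha> \<beta> \<kappa> a (wp \<alpha> \<beta> \<kappa> (\<gamma> b) \<eta> * \<gamma> b)) = real B * R)
       \<and> (\<forall>\<eta>. (\<Sum>b<B. Iref \<alpha> \<beta> \<kappa> a (wp \<alpha> \<beta> \<kappa> (\<gamma> b) \<eta> * \<gamma> b)) = real B * R \<longrightarrow>
             feasible B \<gamma> \<alpha> \<beta> \<kappa> a R (\<lambda>b. wp \<alpha> \<beta> \<kappa> (\<gamma> b) \<eta>)
           \<and> (\<forall>p. feasible B \<gamma> \<alpha> \<beta> \<kappa> a R p \<longrightarrow>
                 (1 / real B) * (\<Sum>b<B. wp \<alpha> \<beta> \<kappa> (\<gamma> b) \<eta>) \<le> (1 / real B) * (\<Sum>b<B. p b)))"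
proof -
  interpret refined_iref \<alpha> \<beta> \<kappa> a using assms by unfold_locales
  have B_pos: "0 < real B" using assms(1) by simp
  have optimal: "feasible B \<gamma> \<alpha> \<beta> \<kappa> a R (\<lambda>b. wp \<alpha> \<beta> \<kappa> (\<gamma> b) \<eta>)
      \<and> (\<forall>p. feasible B \<gamma> \<alpha> \<beta> \<kappa> a R p \<longrightarrow>
           (1 / real B) * (\<Sum>b<B. wp \<alpha> \<beta> \<kappa> (\<gamma> b) \<eta>) \<le> (1 / real B) * (\<Sum>b<B. p b))"
    if level: "(\<Sum>b<B. Iref \<alpha> \<beta> \<kappa> a (wp \<alpha> \<beta> \<kappa> (\<gamma> b) \<eta> * \<gamma> b)) = real B * R" for \<eta>
  proof -
    have "0 < \<eta>" using water_level_pos level assms by blast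
    have "feasible B \<gamma> \<alpha> \<beta> \<kappa> a R (\<lambda>b. wp \<alpha> \<beta> \<kappa> (\<gamma> b) \<eta>)"
      unfolding feasible_def using wp_nonneg level B_pos assms(2) by simp
    moreover have "(\<Sum>b<B. wp \<alpha> \<beta> \<kappa> (\<gamma> b) \<eta>) \<le> (\<Sum>b<B. p b)"
      if "feasible B \<gamma> \<alpha> \<beta> \<kappa> a R p" for p
      using wp_minimal_power[OF assms(2) \<open>0 < \<eta>\<close> _ level] that B_pos
      unfolding feasible_def by (simp add: field_simps)
    ultimately show ?thesis using B_pos by (simp add: divide_right_mono)
  qed
  show ?thesis using water_level_exists[of B \<gamma> R] optimal assms by auto
qed

end
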